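(* Let $K$ be a field, $P=K[x_1,\dots,x_n]$, $X=\{x_1,\dots,x_n\}$, $I\subseteq\mathfrak M=\langle x_1,\dots,x_n\rangle$ an ideal, and $Z\subseteq X$ a set of $s$ distinct indeterminates such that $I$ contains a coherently $Z$-separating tuple $(f_1,\dots,f_s)$. If $s=\dim_K(\mathrm{Lin}_{\mathfrak M}(I))$, then $\mathrm{edim}(P/I)=n-s$ and the $Z$-separating re-embedding $\Phi:P/I\to\widehat P/(I\cap\widehat P)$, $\widehat P=K[X\setminus Z]$, is an optimal re-embedding (i.e., every $K$-algebra isomorphism $P/I\cong P''/I''$ with $P''$ a polynomial ring over $K$ satisfies $\dim P''\ge n-s$).
   Context: For $f\in\mathfrak M$, $\mathrm{Lin}_{\mathfrak M}(f)$ is the homogeneous degree-one part of $f$, and $\mathrm{Lin}_{\mathfrak M}(I)=\langle\mathrm{Lin}_{\mathfrak M}(f)\mid f\in I\rangle_K$. For $f\in P$, $\mathrm{indets}(f)$ is the set of indeterminates dividing some term in the support of $f$; for $f\in\mathfrak M$ with $z$ occurring in $\mathrm{Lin}_{\mathfrak M}(f)$ and $c\neq0$ the coefficient of $z$ in $f$, $\mathrm{tail}_z(f)=z-\frac1cf$, and $f$ is $z$-separating if $z\notin\mathrm{indets}(\mathrm{tail}_z(f))$. A tuple $(f_1,\dots,f_s)$ of nonzero elements of $\mathfrak M$ is coherently $Z$-separating ($Z=\{z_1,\dots,z_s\}$) if each $f_i$ is $z_i$-separating and $z_i\notin\mathrm{indets}(f_j)$ for $j\ne i$. The $Z$-separating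 re-embedding is the $K$-algebra isomorphism $P/I\to\widehat P/(I\cap\widehat P)$ induced by $x\mapsto x$ for $x\notin Z$ and $z_i\mapsto\mathrm{tail}_{z_i}(f_i)$. $\mathrm{edim}(P/I)$ is the minimal $m$ with $P/I\cong K[y_1,\dots,y_m]/I'$ for some ideal $I'$. *)

theory Defs
  imports "HOL.Vector_Spaces" "HOL-Library.Poly_Mapping" "HOL-Algebra.QuotRing"
begin

text \<open>Multivariate polynomials over a field 'k: indeterminates are indexed by natural
  numbers, monomials are finitely supported exponent vectors nat \<Rightarrow>0 nat.\<close>

type_synonym 'k mpoly = "(nat \<Rightarrow>\<^sub>0 nat) \<Rightarrow>\<^sub>0 'k"

definition Const :: "'k::field \<Rightarrow> 'k mpoly" where
  "Const c = Poly_Mapping.single 0 c"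

definition Var :: "nat \<Rightarrow> 'k::field mpoly" where
  "Var v = Poly_Mapping.single (Poly_Mapping.single v 1) 1"

definition indets :: "'k::field mpoly \<Rightarrow> nat set" where
  "indets f = \<Union> ((\<lambda>m::nat \<Rightarrow>\<^sub>0 nat. Poly_Mapping.keys m) ` Poly_Mapping.keys f)"

definition polyring :: "nat set \<Rightarrow> 'k::field mpoly ring" where
  "polyring V = \<lparr>carrier = {p. indets p \<subseteq> V}, monoid.mult = (*), one = 1,
                  zero = 0, add = (+)\<rparr>"

definition maxideal :: "nat set \<Rightarrow> 'k::field mpoly set" where
  "maxideal V = {p \<in> carrier (polyring V). Poly_Mapping.lookup p 0 = 0}"

definition mdeg :: "(nat \<Rightarrow>\<^sub>0 nat) \<Rightarrow> nat" where
  "mdeg m = (\<Sum>v\<in>Poly_Mapping.keys m. Poly_Mapping.lookup m v)"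

definition Lin :: "'k::field mpoly \<Rightarrow> 'k mpoly" where
  "Lin f = Abs_poly_mapping (\<lambda>m. if mdeg m = 1 then Poly_Mapping.lookup f m else 0)"

definition kscale :: "'k::field \<Rightarrow> 'k mpoly \<Rightarrow> 'k mpoly" where
  "kscale c p = Const c * p"

definition LinI :: "'k::field mpoly set \<Rightarrow> 'k mpoly set" where
  "LinI I = module.span kscale (Lin ` I)"

definition dimK :: "'k::field mpoly set \<Rightarrow> nat" where
  "dimK S = vector_space.dim kscale S"

definition coeffVar :: "nat \<Rightarrow> 'k::field mpoly \<Rightarrow> 'k" where
  "coeffVar z f = Poly_Mapping.lookup f (Poly_Mapping.single z 1)"

definition tail :: "nat \<Rightarrow> 'k::field mpoly \<Rightarrow> 'k mpoly" where
  "tail z f = Var z - Const (1 / coeffVar z f) * f"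

definition separating :: "nat \<Rightarrow> 'k::field mpoly \<Rightarrow> bool" where
  "separating z f \<longleftrightarrow> coeffVar z f \<noteq> 0 \<and> z \<notin> indets (tail z f)"

definition coherently_separating ::
    "nat set \<Rightarrow> nat \<Rightarrow> (nat \<Rightarrow> nat) \<Rightarrow> (nat \<Rightarrow> 'k::field mpoly) \<Rightarrow> bool" where
  "coherently_separating X s z f \<longleftrightarrow>
     (\<forall>i<s. f i \<noteq> 0 \<and> f i \<in> maxideal X \<and> separating (z i) (f i)) \<and>
     (\<forall>i<s. \<forall>j<s. j \<noteq> i \<longrightarrow> z i \<notin> indets (f j))"

definition subst :: "(nat \<Rightarrow> 'k::field mpoly) \<Rightarrow> 'k mpoly \<Rightarrow> 'k mpoly" where
  "subst \<sigma> p = (\<Sum>m\<in>Poly_Mapping.keys p. Const (Poly_Mapping.lookup p m) * (\<Prod>v\<in>Poly_Mapping.keys m. \<sigma> v ^ Poly_Mapping.lookup m v))"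

definition sep_subst :: "nat \<Rightarrow> (nat \<Rightarrow> nat) \<Rightarrow> (nat \<Rightarrow> 'k::field mpoly) \<Rightarrow> nat \<Rightarrow> 'k mpoly" where
  "sep_subst s z f v =
     (if \<exists>i<s. z i = v then tail v (f (THE i. i < s \<and> z i = v)) else Var v)"

definition kalg_iso ::
    "nat set \<Rightarrow> 'k::field mpoly set \<Rightarrow> nat set \<Rightarrow> 'k mpoly set \<Rightarrow> ('k mpoly set \<Rightarrow> 'k mpoly set) \<Rightarrow> bool" where
  "kalg_iso V I W J h \<longleftrightarrow>
     h \<in> ring_iso (polyring V Quot I) (polyring W Quot J) \<and>
     (\<forall>c. h (I +>\<^bsub>polyring V\<^esub> Const c) = J +>\<^bsub>polyring W\<^esub> Const c)"

definition edim :: "nat set \<Rightarrow> 'k::field mpoly set \<Rightarrow> nat" where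
  "edim V I = (LEAST m. \<exists>J h. ideal J (polyring {..<m}) \<and> kalg_iso V I {..<m} J h)"

end

theory Submission
  imports Defs
begin

text \<open>Substituting \<open>z\<^sub>i \<mapsto> tail\<^sub>z\<^sub>i(f\<^sub>i)\<close> and fixing the other indeterminates is inverse,
  modulo \<open>I\<close>, to the inclusion \<open>K[X \<setminus> Z] \<subseteq> K[X]\<close>: \<open>z\<^sub>i - tail\<^sub>z\<^sub>i(f\<^sub>i)\<close> is a multiple
  of \<open>f\<^sub>i \<in> I\<close>, and coherence makes the images avoid \<open>Z\<close>. Hence \<open>P/I\<close> is presented with
  \<open>n - s\<close> indeterminates.

  Conversely, the inverse of any \<open>K\<close>-algebra isomorphism \<open>P/I \<cong> K[y\<^sub>1, \<dots>, y\<^sub>m]/J\<close>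
  is induced by a substitution \<open>y\<^sub>w \<mapsto> g\<^sub>w\<close>, so every \<open>x\<^sub>v\<close> is congruent modulo \<open>I\<close>
  to a polynomial in the \<open>g\<^sub>w\<close>. Taking linear parts, which obey a Leibniz rule, puts every
  \<open>x\<^sub>v\<close> into \<open>Lin(I) + span{Lin(g\<^sub>w)}\<close>, whence \<open>n \<le> dim Lin(I) + m = s + m\<close>.\<close>

lemma lookup_Const: "Poly_Mapping.lookup (Const c) m = (if m = 0 then c else 0)"
  by (simp add: Const_def lookup_single when_def)

lemma Const_0 [simp]: "Const 0 = 0"
  and Const_1 [simp]: "Const 1 = 1"
  by (simp_all add: Const_def)

lemma Const_add: "Const (a + b) = Const a + Const b"
  by (simp add: Const_def single_add)

lemma Const_mult: "Const (a * b) = Const a * Const b"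
  by (simp add: Const_def mult_single)

lemma lookup_Const_mult: "Poly_Mapping.lookup (Const c * p) m = c * Poly_Mapping.lookup p m"
  unfolding Const_def mult_map_scale_conv_mult[symmetric]
  by (simp add: Poly_Mapping.map.rep_eq when_def)

lemma lookup_Var: "Poly_Mapping.lookup (Var v) m = (if m = Poly_Mapping.single v 1 then 1 else 0)"
  by (simp add: Var_def lookup_single when_def eq_commute)

lemma single_eq_single_iff [simp]:
  "Poly_Mapping.single v k = Poly_Mapping.single w (k::nat) \<longleftrightarrow> v = w \<or> k = 0"
proof
  assume eq: "Poly_Mapping.single v k = Poly_Mapping.single w k"
  show "v = w \<or> k = 0"
    using arg_cong[OF eq, of "\<lambda>m. Poly_Mapping.lookup m v"] by (auto simp: lookup_single when_def split: if_splits)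
qed auto

lemma coeffVar_Var: "coeffVar w (Var v) = (if v = w then 1 else 0)"
  by (auto simp: coeffVar_def lookup_Var)

lemma coeffVar_Const_mult: "coeffVar w (Const c * p) = c * coeffVar w p"
  by (simp add: coeffVar_def lookup_Const_mult)

lemma coeffVar_sum: "coeffVar w (\<Sum>i\<in>A. g i) = (\<Sum>i\<in>A. coeffVar w (g i))"
  by (simp add: coeffVar_def lookup_sum)

lemma Var_inject: "(Var v :: 'k::field mpoly) = Var w \<longleftrightarrow> v = w"
proof
  assume "(Var v :: 'k mpoly) = Var w"
  then have "coeffVar w (Var v :: 'k mpoly) = coeffVar w (Var w)"
    by simp
  then show "v = w"
    by (simp add: coeffVar_Var split: if_splits)
qed simp

lemma poly_mapping_sum_single:
  "p = (\<Sum>m\<in>Poly_Mapping.keys p. Poly_Mapping.single m (Poly_Mapping.lookup p m))"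
  by (rule poly_mapping_eqI)
     (simp add: lookup_sum lookup_single when_def in_keys_iff sum.delta_remove)

lemma indets_add: "indets (p + q) \<subseteq> indets p \<union> indets q"
  unfolding indets_def using keys_add[of p q] by blast

lemma indets_uminus [simp]: "indets (- p) = indets p"
  unfolding indets_def by (simp add: keys_def)

lemma indets_diff: "indets (p - q) \<subseteq> indets p \<union> indets q"
  using indets_add[of p "- q"] by simp

lemma indets_mult: "indets (p * q) \<subseteq> indets p \<union> indets q"
proof
  fix v assume "v \<in> indets (p * q)"
  then obtain m where m: "m \<in> Poly_Mapping.keys (p * q)" "v \<in> Poly_Mapping.keys m"
    unfolding indets_def by auto
  then obtain a b where "m = a + b" "a \<in> Poly_Mapping.keys p" "b \<in> Poly_Mapping.keys q"
    using keys_mult[of p q] by auto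
  with m keys_add[of a b] show "v \<in> indets p \<union> indets q"
    unfolding indets_def by auto
qed

lemma indets_Const [simp]: "indets (Const c) = {}"
  unfolding indets_def Const_def by simp

lemma indets_0 [simp]: "indets 0 = {}"
  and indets_1 [simp]: "indets 1 = {}"
  using indets_Const[of 0] indets_Const[of 1] by simp_all

lemma indets_Var [simp]: "indets (Var v :: 'k::field mpoly) = {v}"
  unfolding indets_def Var_def by simp

lemma indets_sum: "indets (\<Sum>a\<in>A. f a) \<subseteq> (\<Union>a\<in>A. indets (f a))"
  by (induction A rule: infinite_finite_induct) (use indets_add in fastforce)+

lemma indets_prod: "indets (\<Prod>a\<in>A. f a) \<subseteq> (\<Union>a\<in>A. indets (f a))"
  by (induction A rule: infinite_finite_induct) (use indets_mult in fastforce)+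

lemma indets_power: "indets (p ^ k) \<subseteq> indets p"
  by (induction k) (use indets_mult in fastforce)+

lemma indets_tail: "indets (tail z f) \<subseteq> insert z (indets f)"
  unfolding tail_def
  using indets_diff[of "Var z" "Const (1 / coeffVar z f) * f"]
    indets_mult[of "Const (1 / coeffVar z f)" f]
  by auto

lemma carrier_polyring [simp]: "carrier (polyring V) = {p. indets p \<subseteq> V}"
  and mult_polyring [simp]: "monoid.mult (polyring V) = (*)"
  and add_polyring [simp]: "add (polyring V) = (+)"
  and one_polyring [simp]: "one (polyring V) = 1"
  and zero_polyring [simp]: "zero (polyring V) = 0"
  by (simp_all add: polyring_def)

lemma cring_polyring: "cring (polyring V :: 'k::field mpoly ring)"
proof (rule cringI)
  show "abelian_group (polyring V :: 'k mpoly ring)"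
  proof (rule abelian_groupI, goal_cases)
    case (1 x y) then show ?case using indets_add[of x y] by auto
  next
    case (6 x) then show ?case by (intro bexI[of _ "- x"]) auto
  qed (auto simp: add.assoc add.commute)
  show "comm_monoid (polyring V :: 'k mpoly ring)"
  proof (rule comm_monoidI, goal_cases)
    case (1 x y) then show ?case using indets_mult[of x y] by auto
  qed (auto simp: mult.assoc mult.commute)
qed (simp add: distrib_right)

lemma ring_polyring: "ring (polyring V :: 'k::field mpoly ring)"
  using cring_polyring by (rule cring.axioms(1))

lemma a_minus_polyring:
  assumes "x \<in> carrier (polyring V)" "y \<in> carrier (polyring V)"
  shows "a_minus (polyring V) x y = x - (y :: 'k::field mpoly)"
proof -
  interpret cring "polyring V :: 'k mpoly ring" by (rule cring_polyring)
  have "a_inv (polyring V) y = - y"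
    by (rule minus_equality) (use assms in auto)
  then show ?thesis by (simp add: a_minus_def)
qed

section \<open>Substitution\<close>

definition subst_monom :: "(nat \<Rightarrow> 'k::field mpoly) \<Rightarrow> (nat \<Rightarrow>\<^sub>0 nat) \<Rightarrow> 'k mpoly" where
  "subst_monom \<sigma> m = (\<Prod>v\<in>Poly_Mapping.keys m. \<sigma> v ^ Poly_Mapping.lookup m v)"

lemma subst_eq_sum_monom:
  "subst \<sigma> p = (\<Sum>m\<in>Poly_Mapping.keys p. Const (Poly_Mapping.lookup p m) * subst_monom \<sigma> m)"
  unfolding subst_def subst_monom_def ..

lemma subst_monom_superset:
  assumes "finite S" "Poly_Mapping.keys m \<subseteq> S"
  shows "subst_monom \<sigma> m = (\<Prod>v\<in>S. \<sigma> v ^ Poly_Mapping.lookup m v)"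
  unfolding subst_monom_def
  by (rule prod.mono_neutral_left) (use assms in \<open>auto simp: in_keys_iff\<close>)

lemma subst_monom_add: "subst_monom \<sigma> (a + b) = subst_monom \<sigma> a * subst_monom \<sigma> b"
proof -
  let ?S = "Poly_Mapping.keys a \<union> Poly_Mapping.keys b"
  have fin: "finite ?S" by simp
  have "subst_monom \<sigma> (a + b) = (\<Prod>v\<in>?S. \<sigma> v ^ Poly_Mapping.lookup (a + b) v)"
    by (rule subst_monom_superset[OF fin]) (rule keys_add)
  also have "\<dots> = (\<Prod>v\<in>?S. \<sigma> v ^ Poly_Mapping.lookup a v * \<sigma> v ^ Poly_Mapping.lookup b v)"
    by (simp add: lookup_add power_add)
  also have "\<dots> = subst_monom \<sigma> a * subst_monom \<sigma> b"
    by (simp add: prod.distrib subst_monom_superset[OF fin])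
  finally show ?thesis .
qed

lemma subst_superset:
  assumes "finite S" "Poly_Mapping.keys p \<subseteq> S"
  shows "subst \<sigma> p = (\<Sum>m\<in>S. Const (Poly_Mapping.lookup p m) * subst_monom \<sigma> m)"
  unfolding subst_eq_sum_monom
  by (rule sum.mono_neutral_left) (use assms in \<open>auto simp: in_keys_iff\<close>)

lemma subst_0 [simp]: "subst \<sigma> 0 = 0"
  by (simp add: subst_def)

lemma subst_add: "subst \<sigma> (p + q) = subst \<sigma> p + subst \<sigma> q"
proof -
  let ?S = "Poly_Mapping.keys p \<union> Poly_Mapping.keys q"
  have fin: "finite ?S" by simp
  have "subst \<sigma> (p + q) = (\<Sum>m\<in>?S. Const (Poly_Mapping.lookup (p + q) m) * subst_monom \<sigma> m)"
    by (rule subst_superset[OF fin]) (rule keys_add)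
  also have "\<dots> = (\<Sum>m\<in>?S. Const (Poly_Mapping.lookup p m) * subst_monom \<sigma> m
                          + Const (Poly_Mapping.lookup q m) * subst_monom \<sigma> m)"
    by (simp add: lookup_add Const_add distrib_right)
  also have "\<dots> = subst \<sigma> p + subst \<sigma> q"
    by (simp add: sum.distrib subst_superset[OF fin])
  finally show ?thesis .
qed

lemma subst_single: "subst \<sigma> (Poly_Mapping.single m c) = Const c * subst_monom \<sigma> m"
  by (cases "c = 0") (simp_all add: subst_eq_sum_monom)

lemma subst_sum: "subst \<sigma> (\<Sum>i\<in>A. g i) = (\<Sum>i\<in>A. subst \<sigma> (g i))"
  by (induction A rule: infinite_finite_induct) (simp_all add: subst_add)

lemma subst_mult: "subst \<sigma> (p * q) = subst \<sigma> p * subst \<sigma> q"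
proof -
  let ?sp = "\<lambda>a. Poly_Mapping.single a (Poly_Mapping.lookup p a)"
  let ?sq = "\<lambda>b. Poly_Mapping.single b (Poly_Mapping.lookup q b)"
  have single: "subst \<sigma> (?sp a * ?sq b) = subst \<sigma> (?sp a) * subst \<sigma> (?sq b)" for a b
    by (simp add: mult_single subst_single Const_mult subst_monom_add ac_simps)
  have "p * q = (\<Sum>a\<in>Poly_Mapping.keys p. ?sp a) * (\<Sum>b\<in>Poly_Mapping.keys q. ?sq b)"
    using poly_mapping_sum_single[of p] poly_mapping_sum_single[of q] by simp
  also have "\<dots> = (\<Sum>a\<in>Poly_Mapping.keys p. \<Sum>b\<in>Poly_Mapping.keys q. ?sp a * ?sq b)"
    by (rule sum_product)
  finally have "subst \<sigma> (p * q) = (\<Sum>a\<in>Poly_Mapping.keys p. \<Sum>b\<in>Poly_Mapping.keys q.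
                                     subst \<sigma> (?sp a) * subst \<sigma> (?sq b))"
    by (simp add: subst_sum single)
  also have "\<dots> = subst \<sigma> p * subst \<sigma> q"
    by (simp add: sum_product[symmetric] subst_sum[symmetric] poly_mapping_sum_single[symmetric])
  finally show ?thesis .
qed

lemma subst_Const [simp]: "subst \<sigma> (Const c) = Const c"
  using subst_single[of \<sigma> 0 c] by (simp add: Const_def subst_monom_def)

lemma subst_1 [simp]: "subst \<sigma> 1 = 1"
  using subst_Const[of \<sigma> 1] by simp

lemma subst_Var [simp]: "subst \<sigma> (Var v) = \<sigma> v"
  unfolding Var_def by (simp add: subst_single subst_monom_def)

lemma subst_cong:
  assumes "\<And>v. v \<in> indets p \<Longrightarrow> \<sigma> v = \<tau> v"
  shows "subst \<sigma> p = subst \<tau> p"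
  unfolding subst_def
proof (intro sum.cong refl arg_cong[where f = "\<lambda>x. _ * x"] prod.cong)
  fix m v assume "m \<in> Poly_Mapping.keys p" "v \<in> Poly_Mapping.keys m"
  then have "v \<in> indets p" unfolding indets_def by auto
  then show "\<sigma> v ^ Poly_Mapping.lookup m v = \<tau> v ^ Poly_Mapping.lookup m v"
    using assms by simp
qed

lemma Var_power: "(Var v :: 'k::field mpoly) ^ k = Poly_Mapping.single (Poly_Mapping.single v k) 1"
  by (induction k) (simp_all add: Var_def mult_single single_add[symmetric] add.commute)

lemma prod_single_one:
  "(\<Prod>v\<in>S. Poly_Mapping.single (g v) (1::'k::field)) = Poly_Mapping.single (\<Sum>v\<in>S. g v) 1"
  by (induction S rule: infinite_finite_induct) (simp_all add: mult_single)

lemma subst_Var_id [simp]: "subst Var p = p"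
proof -
  have monom: "subst_monom Var m = Poly_Mapping.single m 1" for m
    unfolding subst_monom_def Var_power prod_single_one
    by (simp add: poly_mapping_sum_single[of m, symmetric])
  then have "subst Var p = (\<Sum>m\<in>Poly_Mapping.keys p. Poly_Mapping.single m (Poly_Mapping.lookup p m))"
    unfolding subst_eq_sum_monom by (simp add: monom Const_def mult_single)
  then show ?thesis
    using poly_mapping_sum_single[of p] by simp
qed

lemma indets_subst:
  assumes "\<And>v. v \<in> indets p \<Longrightarrow> indets (\<sigma> v) \<subseteq> W"
  shows "indets (subst \<sigma> p) \<subseteq> W"
proof -
  have monom: "indets (subst_monom \<sigma> m) \<subseteq> W" if m: "m \<in> Poly_Mapping.keys p" for m
  proof -
    have "indets (subst_monom \<sigma> m) \<subseteq> (\<Union>v\<in>Poly_Mapping.keys m. indets (\<sigma> v ^ Poly_Mapping.lookup m v))"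
      unfolding subst_monom_def by (rule indets_prod)
    also have "\<dots> \<subseteq> (\<Union>v\<in>Poly_Mapping.keys m. indets (\<sigma> v))"
      using indets_power by (intro UN_mono) auto
    also have "\<dots> \<subseteq> W"
      using m assms unfolding indets_def by blast
    finally show ?thesis .
  qed
  have "indets (subst \<sigma> p) \<subseteq>
          (\<Union>m\<in>Poly_Mapping.keys p. indets (Const (Poly_Mapping.lookup p m) * subst_monom \<sigma> m))"
    unfolding subst_eq_sum_monom by (rule indets_sum)
  also have "\<dots> \<subseteq> W"
    using monom indets_mult[of "Const _" "subst_monom \<sigma> _"] by fastforce
  finally show ?thesis .
qed

lemma subst_carrier:
  assumes "p \<in> carrier (polyring V)" "\<sigma> ` V \<subseteq> carrier (polyring W)"
  shows "subst \<sigma> p \<in> carrier (polyring W)"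
  using indets_subst[of p \<sigma> W] assms by fastforce

lemma polyring_induct [consumes 1, case_names Const Var add mult]:
  assumes p: "p \<in> carrier (polyring V)"
    and Const: "\<And>c. P (Const c)"
    and Var: "\<And>v. v \<in> V \<Longrightarrow> P (Var v)"
    and add: "\<And>p q. p \<in> carrier (polyring V) \<Longrightarrow> q \<in> carrier (polyring V) \<Longrightarrow>
                P p \<Longrightarrow> P q \<Longrightarrow> P (p + q)"
    and mult: "\<And>p q. p \<in> carrier (polyring V) \<Longrightarrow> q \<in> carrier (polyring V) \<Longrightarrow>
                P p \<Longrightarrow> P q \<Longrightarrow> P (p * q)"
  shows "P (p :: 'k::field mpoly)"
proof -
  define Q where "Q x \<longleftrightarrow> indets x \<subseteq> V \<and> P x" for x :: "'k mpoly"
  have Q_Const: "Q (Const c)" for c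
    using Const by (simp add: Q_def)
  have Q_add: "Q x \<Longrightarrow> Q y \<Longrightarrow> Q (x + y)" for x y
    using add[of x y] indets_add[of x y] by (auto simp: Q_def)
  have Q_mult: "Q x \<Longrightarrow> Q y \<Longrightarrow> Q (x * y)" for x y
    using mult[of x y] indets_mult[of x y] by (auto simp: Q_def)
  have Q_sum: "(\<And>i. i \<in> S \<Longrightarrow> Q (g i)) \<Longrightarrow> Q (\<Sum>i\<in>S. g i)" for S and g :: "'b \<Rightarrow> 'k mpoly"
    by (induction S rule: infinite_finite_induct) (use Q_Const[of 0] Q_add in auto)
  have Q_prod: "(\<And>i. i \<in> S \<Longrightarrow> Q (g i)) \<Longrightarrow> Q (\<Prod>i\<in>S. g i)" for S and g :: "'b \<Rightarrow> 'k mpoly"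
    by (induction S rule: infinite_finite_induct) (use Q_Const[of 1] Q_mult in auto)
  have Q_power: "Q x \<Longrightarrow> Q (x ^ k)" for x k
    by (induction k) (use Q_Const[of 1] Q_mult in simp_all)
  have "Q (subst Var p)"
    unfolding subst_eq_sum_monom subst_monom_def
  proof (intro Q_sum Q_mult[OF Q_Const] Q_prod Q_power)
    fix m v assume "m \<in> Poly_Mapping.keys p" "v \<in> Poly_Mapping.keys m"
    then have "v \<in> indets p"
      unfolding indets_def by auto
    then have "v \<in> V"
      using p by auto
    then show "Q (Var v)"
      using Var by (simp add: Q_def)
  qed
  then show ?thesis by (simp add: Q_def)
qed

lemma subst_subst: "subst \<sigma> (subst \<tau> p) = subst (\<lambda>v. subst \<sigma> (\<tau> v)) p"
proof -
  have "p \<in> carrier (polyring UNIV)" by simp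
  then show ?thesis
    by (induction rule: polyring_induct) (simp_all add: subst_add subst_mult)
qed

lemma subst_ring_hom:
  assumes "\<sigma> ` V \<subseteq> carrier (polyring W)"
  shows "subst \<sigma> \<in> ring_hom (polyring V :: 'k::field mpoly ring) (polyring W)"
proof (rule ring_hom_memI)
  show "subst \<sigma> p \<in> carrier (polyring W)" if "p \<in> carrier (polyring V)" for p
    using that assms by (rule subst_carrier)
qed (simp_all add: subst_add subst_mult)

lemma subst_rename_inverse:
  assumes "q \<in> carrier (polyring W)" "\<And>u. u \<in> W \<Longrightarrow> \<rho>' (\<rho> u) = u"
  shows "subst (\<lambda>w. Var (\<rho>' w)) (subst (\<lambda>u. Var (\<rho> u)) q) = (q :: 'k::field mpoly)"
proof -
  have "subst (\<lambda>w. Var (\<rho>' w)) (subst (\<lambda>u. Var (\<rho> u)) q) = subst Var q"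
    unfolding subst_subst by (rule subst_cong) (use assms in auto)
  then show ?thesis by simp
qed

context
  fixes I :: "'k::field mpoly set" and V :: "nat set"
  assumes I: "ideal I (polyring V)"
begin

lemma ideal_carrier: "x \<in> I \<Longrightarrow> x \<in> carrier (polyring V)"
  using ideal.Icarr[OF I] by simp

lemma ideal_zero: "0 \<in> I"
  using additive_subgroup.zero_closed[OF ideal.axioms(1)[OF I]] by simp

lemma ideal_add: "x \<in> I \<Longrightarrow> y \<in> I \<Longrightarrow> x + y \<in> I"
  using additive_subgroup.a_closed[OF ideal.axioms(1)[OF I]] by simp

lemma ideal_diff: "x \<in> I \<Longrightarrow> y \<in> I \<Longrightarrow> x - y \<in> I"
proof -
  assume xy: "x \<in> I" "y \<in> I"
  interpret additive_subgroup I "polyring V"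
    using I by (rule ideal.axioms(1))
  have "x \<oplus>\<^bsub>polyring V\<^esub> (\<ominus>\<^bsub>polyring V\<^esub> y) \<in> I"
    using xy by blast
  then show ?thesis
    using xy a_minus_polyring[OF ideal_carrier ideal_carrier] by (simp add: a_minus_def)
qed

lemma ideal_mult_left: "x \<in> I \<Longrightarrow> y \<in> carrier (polyring V) \<Longrightarrow> y * x \<in> I"
  using ideal.I_l_closed[OF I] by simp

lemma ideal_mult_right: "x \<in> I \<Longrightarrow> y \<in> carrier (polyring V) \<Longrightarrow> x * y \<in> I"
  using ideal.I_r_closed[OF I] by simp

lemma rcos_eq_iff:
  assumes "x \<in> carrier (polyring V)" "y \<in> carrier (polyring V)"
  shows "I +>\<^bsub>polyring V\<^esub> x = I +>\<^bsub>polyring V\<^esub> y \<longleftrightarrow> x - y \<in> I"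
  using ring.quotient_eq_iff_same_a_r_cos[OF ring_polyring I assms] a_minus_polyring[OF assms]
  by simp

lemma rcos_eq_ideal_iff:
  assumes "x \<in> carrier (polyring V)"
  shows "I +>\<^bsub>polyring V\<^esub> x = I \<longleftrightarrow> x \<in> I"
  using rcos_eq_iff[OF assms, of 0] ring.a_rcos_zero[OF ring_polyring I ideal_zero] by simp

lemma carrier_Quot: "carrier (polyring V Quot I) = {I +>\<^bsub>polyring V\<^esub> x | x. x \<in> carrier (polyring V)}"
  unfolding FactRing_def A_RCOSETS_def' by auto

lemma rcos_ring_hom: "(\<lambda>x. I +>\<^bsub>polyring V\<^esub> x) \<in> ring_hom (polyring V) (polyring V Quot I)"
  using ideal.rcos_ring_hom[OF I] .

lemma rcos_carrier: "x \<in> carrier (polyring V) \<Longrightarrow> I +>\<^bsub>polyring V\<^esub> x \<in> carrier (polyring V Quot I)"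
  using ring_hom_closed[OF rcos_ring_hom] .

end

section \<open>Quotient isomorphisms induced by substitutions\<close>

lemma rcos_subst_ring_hom_ring:
  assumes J: "ideal J (polyring W)" and \<sigma>: "\<sigma> ` V \<subseteq> carrier (polyring W)"
  shows "ring_hom_ring (polyring V :: 'k::field mpoly ring) (polyring W Quot J)
           (\<lambda>p. J +>\<^bsub>polyring W\<^esub> subst \<sigma> p)"
proof (rule ring_hom_ringI2[OF ring_polyring ideal.quotient_is_ring[OF J]])
  show "(\<lambda>p. J +>\<^bsub>polyring W\<^esub> subst \<sigma> p) \<in> ring_hom (polyring V) (polyring W Quot J)"
    using ring_hom_trans[OF subst_ring_hom[OF \<sigma>] rcos_ring_hom[OF J]] by (simp add: comp_def)
qed

lemma a_kernel_rcos_subst: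
  assumes J: "ideal J (polyring W)" and \<sigma>: "\<sigma> ` V \<subseteq> carrier (polyring W)"
  shows "a_kernel (polyring V :: 'k::field mpoly ring) (polyring W Quot J)
           (\<lambda>p. J +>\<^bsub>polyring W\<^esub> subst \<sigma> p) = {p \<in> carrier (polyring V). subst \<sigma> p \<in> J}"
  using rcos_eq_ideal_iff[OF J subst_carrier[OF _ \<sigma>]]
  unfolding a_kernel_def' by (auto simp: FactRing_def)

lemma ideal_subst_preimage:
  assumes I: "ideal I (polyring V)" and \<tau>: "\<tau> ` W \<subseteq> carrier (polyring V)"
  shows "ideal {q \<in> carrier (polyring W). subst \<tau> q \<in> I} (polyring W :: 'k::field mpoly ring)"
proof -
  have "ring_hom_ring (polyring W) (polyring V Quot I) (\<lambda>q. I +>\<^bsub>polyring V\<^esub> subst \<tau> q)"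
    using I \<tau> by (rule rcos_subst_ring_hom_ring)
  then have "ideal (a_kernel (polyring W) (polyring V Quot I) (\<lambda>q. I +>\<^bsub>polyring V\<^esub> subst \<tau> q))
               (polyring W)"
    by (rule ring_hom_ring.kernel_is_ideal)
  moreover have "a_kernel (polyring W) (polyring V Quot I) (\<lambda>q. I +>\<^bsub>polyring V\<^esub> subst \<tau> q) =
                 {q \<in> carrier (polyring W). subst \<tau> q \<in> I}"
    using I \<tau> by (rule a_kernel_rcos_subst)
  ultimately show ?thesis
    by simp
qed

lemma kalg_iso_of_substs:
  fixes I :: "'k::field mpoly set"
  assumes I: "ideal I (polyring V)"
    and \<sigma>: "\<sigma> ` V \<subseteq> carrier (polyring W)"
    and \<tau>: "\<tau> ` W \<subseteq> carrier (polyring V)"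
    and \<tau>\<sigma>: "\<And>p. p \<in> carrier (polyring V) \<Longrightarrow> subst \<tau> (subst \<sigma> p) - p \<in> I"
    and \<sigma>\<tau>: "\<And>q. q \<in> carrier (polyring W) \<Longrightarrow> subst \<sigma> (subst \<tau> q) = q"
  defines "J \<equiv> {q \<in> carrier (polyring W). subst \<tau> q \<in> I}"
  shows "ideal J (polyring W) \<and> (\<exists>h. kalg_iso V I W J h \<and>
           (\<forall>p\<in>carrier (polyring V). h (I +>\<^bsub>polyring V\<^esub> p) = J +>\<^bsub>polyring W\<^esub> subst \<sigma> p))"
proof -
  let ?\<psi> = "\<lambda>p. J +>\<^bsub>polyring W\<^esub> subst \<sigma> p"
  have J: "ideal J (polyring W)"
    unfolding J_def using I \<tau> by (rule ideal_subst_preimage)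
  have hom: "ring_hom_ring (polyring V) (polyring W Quot J) ?\<psi>"
    using J \<sigma> by (rule rcos_subst_ring_hom_ring)
  have "subst \<tau> (subst \<sigma> p) \<in> I \<longleftrightarrow> p \<in> I" if "p \<in> carrier (polyring V)" for p
  proof -
    have "subst \<tau> (subst \<sigma> p) = (subst \<tau> (subst \<sigma> p) - p) + p"
      and "p = subst \<tau> (subst \<sigma> p) - (subst \<tau> (subst \<sigma> p) - p)"
      by simp_all
    then show ?thesis
      using ideal_add[OF I] ideal_diff[OF I] \<tau>\<sigma>[OF that] by metis
  qed
  then have ker: "a_kernel (polyring V) (polyring W Quot J) ?\<psi> = I"
    unfolding a_kernel_rcos_subst[OF J \<sigma>] unfolding J_def
    using ideal_carrier[OF I] subst_carrier[OF _ \<sigma>] by blast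
  have "carrier (polyring W Quot J) \<subseteq> ?\<psi> ` carrier (polyring V)"
  proof
    fix X assume "X \<in> carrier (polyring W Quot J)"
    then obtain q where "q \<in> carrier (polyring W)" "X = J +>\<^bsub>polyring W\<^esub> q"
      using carrier_Quot[OF J] by auto
    then show "X \<in> ?\<psi> ` carrier (polyring V)"
      using \<sigma>\<tau> subst_carrier[OF _ \<tau>] by (metis image_eqI)
  qed
  then have surj: "?\<psi> ` carrier (polyring V) = carrier (polyring W Quot J)"
    using ring_hom_closed[OF ring_hom_ring.homh[OF hom]] by blast
  define h where "h X = the_elem (?\<psi> ` X)" for X
  have iso: "h \<in> ring_iso (polyring V Quot I) (polyring W Quot J)"
    using ring_hom_ring.FactRing_iso_set[OF hom surj] unfolding ker h_def .
  have val: "h (I +>\<^bsub>polyring V\<^esub> p) = ?\<psi> p" if "p \<in> carrier (polyring V)" for p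
    using ring_hom_ring.the_elem_simp[OF hom that] unfolding ker h_def .
  have "kalg_iso V I W J h"
    unfolding kalg_iso_def using iso val[of "Const c" for c] by simp
  with J val show ?thesis by blast
qed

lemma kalg_iso_subst_agree:
  assumes I: "ideal I (polyring V)" and J: "ideal J (polyring W)"
    and iso: "kalg_iso V I W J h"
    and \<tau>: "\<tau> ` W \<subseteq> carrier (polyring V)"
    and gen: "\<And>w. w \<in> W \<Longrightarrow> h (I +>\<^bsub>polyring V\<^esub> \<tau> w) = J +>\<^bsub>polyring W\<^esub> Var w"
    and q: "q \<in> carrier (polyring W)"
  shows "h (I +>\<^bsub>polyring V\<^esub> subst \<tau> q) = J +>\<^bsub>polyring W\<^esub> (q :: 'k::field mpoly)"
  using q
proof (induction q rule: polyring_induct)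
  case (Const c)
  then show ?case using iso by (simp add: kalg_iso_def)
next
  case (Var w)
  then show ?case using gen by simp
next
  case (add p q)
  let ?\<pi>I = "\<lambda>x. I +>\<^bsub>polyring V\<^esub> x" and ?\<pi>J = "\<lambda>x. J +>\<^bsub>polyring W\<^esub> x"
  have hom: "h \<in> ring_hom (polyring V Quot I) (polyring W Quot J)"
    using iso by (simp add: kalg_iso_def ring_iso_def)
  have sp: "subst \<tau> p \<in> carrier (polyring V)" and sq: "subst \<tau> q \<in> carrier (polyring V)"
    using add.hyps subst_carrier[OF _ \<tau>] by auto
  have "h (?\<pi>I (subst \<tau> (p + q))) = h (?\<pi>I (subst \<tau> p) \<oplus>\<^bsub>polyring V Quot I\<^esub> ?\<pi>I (subst \<tau> q))"
    using ring_hom_add[OF rcos_ring_hom[OF I] sp sq] by (simp add: subst_add)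
  also have "\<dots> = ?\<pi>J p \<oplus>\<^bsub>polyring W Quot J\<^esub> ?\<pi>J q"
    using ring_hom_add[OF hom rcos_carrier[OF I sp] rcos_carrier[OF I sq]] add.IH by simp
  also have "\<dots> = ?\<pi>J (p + q)"
    using ring_hom_add[OF rcos_ring_hom[OF J] add.hyps] by simp
  finally show ?case .
next
  case (mult p q)
  let ?\<pi>I = "\<lambda>x. I +>\<^bsub>polyring V\<^esub> x" and ?\<pi>J = "\<lambda>x. J +>\<^bsub>polyring W\<^esub> x"
  have hom: "h \<in> ring_hom (polyring V Quot I) (polyring W Quot J)"
    using iso by (simp add: kalg_iso_def ring_iso_def)
  have sp: "subst \<tau> p \<in> carrier (polyring V)" and sq: "subst \<tau> q \<in> carrier (polyring V)"
    using mult.hyps subst_carrier[OF _ \<tau>] by auto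
  have "h (?\<pi>I (subst \<tau> (p * q))) = h (?\<pi>I (subst \<tau> p) \<otimes>\<^bsub>polyring V Quot I\<^esub> ?\<pi>I (subst \<tau> q))"
    using ring_hom_mult[OF rcos_ring_hom[OF I] sp sq] by (simp add: subst_mult)
  also have "\<dots> = ?\<pi>J p \<otimes>\<^bsub>polyring W Quot J\<^esub> ?\<pi>J q"
    using ring_hom_mult[OF hom rcos_carrier[OF I sp] rcos_carrier[OF I sq]] mult.IH by simp
  also have "\<dots> = ?\<pi>J (p * q)"
    using ring_hom_mult[OF rcos_ring_hom[OF J] mult.hyps] by simp
  finally show ?case .
qed

lemma kalg_iso_inverse_subst:
  assumes I: "ideal I (polyring V)" and J: "ideal J (polyring W)"
    and iso: "kalg_iso V I W J h"
  obtains \<tau> where "\<tau> ` W \<subseteq> carrier (polyring V)"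
    and "\<And>p. p \<in> carrier (polyring V) \<Longrightarrow>
           \<exists>q\<in>carrier (polyring W). p - subst \<tau> q \<in> (I :: 'k::field mpoly set)"
proof -
  have hom: "h \<in> ring_hom (polyring V Quot I) (polyring W Quot J)"
    and bij: "bij_betw h (carrier (polyring V Quot I)) (carrier (polyring W Quot J))"
    using iso by (auto simp: kalg_iso_def ring_iso_def)
  have "\<forall>w\<in>W. \<exists>p. p \<in> carrier (polyring V) \<and> h (I +>\<^bsub>polyring V\<^esub> p) = J +>\<^bsub>polyring W\<^esub> Var w"
  proof
    fix w assume "w \<in> W"
    have "J +>\<^bsub>polyring W\<^esub> Var w \<in> h ` carrier (polyring V Quot I)"
      using rcos_carrier[OF J, of "Var w"] \<open>w \<in> W\<close> bij_betw_imp_surj_on[OF bij] by simp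
    then show "\<exists>p. p \<in> carrier (polyring V) \<and> h (I +>\<^bsub>polyring V\<^esub> p) = J +>\<^bsub>polyring W\<^esub> Var w"
      using carrier_Quot[OF I] by auto
  qed
  then obtain \<tau> where \<tau>: "\<tau> ` W \<subseteq> carrier (polyring V)"
    and gen: "\<And>w. w \<in> W \<Longrightarrow> h (I +>\<^bsub>polyring V\<^esub> \<tau> w) = J +>\<^bsub>polyring W\<^esub> Var w"
    by (auto dest!: bchoice)
  have "\<exists>q\<in>carrier (polyring W). p - subst \<tau> q \<in> I" if p: "p \<in> carrier (polyring V)" for p
  proof -
    obtain q where q: "q \<in> carrier (polyring W)" "h (I +>\<^bsub>polyring V\<^esub> p) = J +>\<^bsub>polyring W\<^esub> q"
      using ring_hom_closed[OF hom rcos_carrier[OF I p]] carrier_Quot[OF J] by auto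
    have sq: "subst \<tau> q \<in> carrier (polyring V)"
      using subst_carrier[OF q(1) \<tau>] .
    have "h (I +>\<^bsub>polyring V\<^esub> p) = h (I +>\<^bsub>polyring V\<^esub> subst \<tau> q)"
      using q kalg_iso_subst_agree[OF I J iso \<tau> gen q(1)] by simp
    then have "I +>\<^bsub>polyring V\<^esub> p = I +>\<^bsub>polyring V\<^esub> subst \<tau> q"
      using bij_betw_imp_inj_on[OF bij] rcos_carrier[OF I p] rcos_carrier[OF I sq]
      by (auto dest: inj_onD)
    then show ?thesis
      using rcos_eq_iff[OF I p sq] q(1) by blast
  qed
  with \<tau> that show ?thesis by blast
qed

section \<open>Linear parts\<close>

lemma monomial_add_eq_single_iff:
  "(a::nat \<Rightarrow>\<^sub>0 nat) + b = Poly_Mapping.single w 1 \<longleftrightarrow>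
     a = 0 \<and> b = Poly_Mapping.single w 1 \<or> a = Poly_Mapping.single w 1 \<and> b = 0"
proof
  assume ab: "a + b = Poly_Mapping.single w 1"
  have off_w: "Poly_Mapping.lookup a v = 0 \<and> Poly_Mapping.lookup b v = 0" if "v \<noteq> w" for v
    using arg_cong[OF ab, of "\<lambda>m. Poly_Mapping.lookup m v"] that
    by (simp add: lookup_add lookup_single)
  have at_w: "Poly_Mapping.lookup a w + Poly_Mapping.lookup b w = 1"
    using arg_cong[OF ab, of "\<lambda>m. Poly_Mapping.lookup m w"] by (simp add: lookup_add)
  have "a = 0 \<or> b = 0"
  proof (cases "Poly_Mapping.lookup a w = 0")
    case True
    then show ?thesis
      using off_w by (intro disjI1 poly_mapping_eqI) (metis lookup_zero)
  next
    case False
    then have "Poly_Mapping.lookup b w = 0"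
      using at_w by simp
    then show ?thesis
      using off_w by (intro disjI2 poly_mapping_eqI) (metis lookup_zero)
  qed
  then show "a = 0 \<and> b = Poly_Mapping.single w 1 \<or> a = Poly_Mapping.single w 1 \<and> b = 0"
    using ab by auto
qed auto

lemma lookup_mult_sum_keys:
  "Poly_Mapping.lookup (f * g) k =
     (\<Sum>a\<in>Poly_Mapping.keys f. \<Sum>b\<in>Poly_Mapping.keys g.
        if a + b = k then Poly_Mapping.lookup f a * Poly_Mapping.lookup g b else 0)"
proof -
  have "f * g = (\<Sum>a\<in>Poly_Mapping.keys f. Poly_Mapping.single a (Poly_Mapping.lookup f a)) *
                (\<Sum>b\<in>Poly_Mapping.keys g. Poly_Mapping.single b (Poly_Mapping.lookup g b))"
    using poly_mapping_sum_single[of f] poly_mapping_sum_single[of g] by simp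
  then show ?thesis
    by (simp add: sum_product mult_single lookup_sum lookup_single when_def)
qed

lemma lookup_mult_single:
  fixes f g :: "'k::field mpoly" and w :: nat
  defines "k \<equiv> Poly_Mapping.single w 1"
  shows "Poly_Mapping.lookup (f * g) k =
           Poly_Mapping.lookup f 0 * Poly_Mapping.lookup g k + Poly_Mapping.lookup f k * Poly_Mapping.lookup g 0"
proof -
  have "k \<noteq> 0"
    unfolding k_def by (metis lookup_single_eq lookup_zero one_neq_zero)
  then have "Poly_Mapping.lookup (f * g) k =
      (\<Sum>a\<in>Poly_Mapping.keys f.
          (if a = 0 then \<Sum>b\<in>Poly_Mapping.keys g. if b = k then Poly_Mapping.lookup f a * Poly_Mapping.lookup g b else 0 else 0)
        + (if a = k then \<Sum>b\<in>Poly_Mapping.keys g. if b = 0 then Poly_Mapping.lookup f a * Poly_Mapping.lookup g b else 0 else 0))"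
    unfolding lookup_mult_sum_keys k_def monomial_add_eq_single_iff by (intro sum.cong) auto
  then show ?thesis
    by (simp add: sum.distrib in_keys_iff)
qed

lemma mdeg_eq_1_iff: "mdeg m = 1 \<longleftrightarrow> (\<exists>w. m = Poly_Mapping.single w 1)"
proof
  assume "mdeg m = 1"
  then obtain w where "Poly_Mapping.lookup m w = 1" "\<And>v. v \<noteq> w \<Longrightarrow> Poly_Mapping.lookup m v = 0"
    unfolding mdeg_def sum_eq_1_iff[OF finite_keys] by (metis in_keys_iff)
  then have "m = Poly_Mapping.single w 1"
    by (intro poly_mapping_eqI) (auto simp: lookup_single when_def)
  then show "\<exists>w. m = Poly_Mapping.single w 1" ..
qed (auto simp: mdeg_def)

lemma lookup_Lin: "Poly_Mapping.lookup (Lin f) m = (if mdeg m = 1 then Poly_Mapping.lookup f m else 0)"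
proof -
  have "finite {m. (if mdeg m = 1 then Poly_Mapping.lookup f m else 0) \<noteq> 0}"
    by (rule finite_subset[of _ "Poly_Mapping.keys f"]) (auto simp: in_keys_iff)
  then show ?thesis
    unfolding Lin_def by simp
qed

lemma Lin_add: "Lin (f + g) = Lin f + Lin g"
  by (rule poly_mapping_eqI) (simp add: lookup_Lin lookup_add)

lemma Lin_diff: "Lin (f - g) = Lin f - Lin g"
  by (rule poly_mapping_eqI) (simp add: lookup_Lin lookup_minus)

lemma Lin_Const [simp]: "Lin (Const c) = 0"
  by (rule poly_mapping_eqI) (simp add: lookup_Lin lookup_Const mdeg_def)

lemma Lin_Var [simp]: "Lin (Var v) = Var v"
  by (rule poly_mapping_eqI) (auto simp: lookup_Lin lookup_Var mdeg_def)

lemma Lin_mult: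
  "Lin (f * g) = Const (Poly_Mapping.lookup f 0) * Lin g + Const (Poly_Mapping.lookup g 0) * Lin f"
proof (rule poly_mapping_eqI)
  fix m
  show "Poly_Mapping.lookup (Lin (f * g)) m =
        Poly_Mapping.lookup (Const (Poly_Mapping.lookup f 0) * Lin g + Const (Poly_Mapping.lookup g 0) * Lin f) m"
  proof (cases "mdeg m = 1")
    case True
    then obtain w where "m = Poly_Mapping.single w 1"
      using mdeg_eq_1_iff by blast
    then show ?thesis
      using True lookup_mult_single[of f g w]
      by (simp add: lookup_Lin lookup_add lookup_Const_mult)
  next
    case False
    then show ?thesis
      by (simp add: lookup_Lin lookup_add lookup_Const_mult)
  qed
qed

interpretation kspace: vector_space "kscale :: 'k::field \<Rightarrow> 'k mpoly \<Rightarrow> 'k mpoly"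
  by unfold_locales
    (simp_all add: kscale_def distrib_left distrib_right Const_add Const_mult mult.assoc)

lemma span_Const_mult: "x \<in> kspace.span S \<Longrightarrow> Const c * x \<in> kspace.span S"
  using kspace.span_scale[of x S c] by (simp add: kscale_def)

lemma Lin_subst_in_span:
  assumes "q \<in> carrier (polyring W)"
  shows "Lin (subst \<tau> q) \<in> kspace.span (Lin ` \<tau> ` W)"
  using assms
proof (induction q rule: polyring_induct)
  case (Const c)
  then show ?case by (simp add: kspace.span_zero)
next
  case (Var w)
  then show ?case by (simp add: kspace.span_base)
next
  case (add p q)
  then show ?case by (simp add: subst_add Lin_add kspace.span_add)
next
  case (mult p q)
  then show ?case
    by (simp add: subst_mult Lin_mult kspace.span_add span_Const_mult)
qed

lemma Lin_in_span_Var: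
  assumes "f \<in> carrier (polyring V)"
  shows "Lin f \<in> kspace.span (Var ` V)"
  using Lin_subst_in_span[OF assms, of Var] by (simp add: image_image)

lemma independent_Var: "kspace.independent (Var ` V :: 'k::field mpoly set)"
  unfolding kspace.independent_explicit_module
proof (intro allI impI)
  fix t x and u :: "'k mpoly \<Rightarrow> 'k"
  assume t: "finite t" "t \<subseteq> Var ` V" and sum: "(\<Sum>v\<in>t. kscale (u v) v) = 0" and x: "x \<in> t"
  obtain w where w: "x = Var w"
    using t x by auto
  have "coeffVar w (\<Sum>v\<in>t. kscale (u v) v) = (\<Sum>v\<in>t. if v = x then u v else 0)"
    unfolding coeffVar_sum kscale_def coeffVar_Const_mult
    by (intro sum.cong refl) (use t in \<open>auto simp: w coeffVar_Var Var_inject\<close>)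
  then show "u x = 0"
    using sum t x by (simp add: coeffVar_def)
qed

lemma (in vector_space) card_le_dim_add_card:
  assumes A: "independent A" "A \<subseteq> span (S \<union> L)" and L: "finite L"
    and T: "S \<subseteq> span T" "finite T"
  shows "card A \<le> dim S + card L"
proof -
  obtain B where B: "B \<subseteq> S" "independent B" "S \<subseteq> span B" "card B = dim S"
    using basis_exists by blast
  have "finite B"
    using independent_span_bound[OF T(2) B(2)] B(1) T(1) by blast
  have "S \<union> L \<subseteq> span (B \<union> L)"
    using B(3) span_mono[of B "B \<union> L"] span_superset[of "B \<union> L"] by blast
  then have "A \<subseteq> span (B \<union> L)"
    using A(2) span_mono span_span by blast
  then have "card A \<le> card (B \<union> L)"
    using independent_span_bound[OF _ A(1)] \<open>finite B\<close> L by blast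
  also have "\<dots> \<le> dim S + card L"
    using card_Un_le[of B L] B(4) by simp
  finally show ?thesis .
qed

section \<open>The lower bound for the embedding dimension\<close>

lemma card_le_dim_LinI_add:
  fixes I :: "'k::field mpoly set"
  assumes I: "ideal I (polyring {..<n})" and J: "ideal J (polyring {..<m})"
    and iso: "kalg_iso {..<n} I {..<m} J h"
  shows "n \<le> dimK (LinI I) + m"
proof -
  obtain \<tau> where \<tau>: "\<tau> ` {..<m} \<subseteq> carrier (polyring {..<n})"
    and cong: "\<And>p. p \<in> carrier (polyring {..<n}) \<Longrightarrow>
                 \<exists>q\<in>carrier (polyring {..<m}). p - subst \<tau> q \<in> I"
    using kalg_iso_inverse_subst[OF I J iso] by blast
  let ?L = "Lin ` \<tau> ` {..<m}"
  have Var_span: "Var ` {..<n} \<subseteq> kspace.span (Lin ` I \<union> ?L)"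
  proof (rule image_subsetI)
    fix v assume "v \<in> {..<n}"
    then obtain q where q: "q \<in> carrier (polyring {..<m})" "Var v - subst \<tau> q \<in> I"
      using cong[of "Var v"] by auto
    have "Lin (Var v - subst \<tau> q) \<in> kspace.span (Lin ` I \<union> ?L)"
      using q(2) by (intro kspace.span_base) auto
    moreover have "Lin (subst \<tau> q) \<in> kspace.span (Lin ` I \<union> ?L)"
      using Lin_subst_in_span[OF q(1)] kspace.span_mono[of ?L "Lin ` I \<union> ?L"] by blast
    ultimately have "Lin (Var v - subst \<tau> q) + Lin (subst \<tau> q) \<in> kspace.span (Lin ` I \<union> ?L)"
      by (rule kspace.span_add)
    then show "Var v \<in> kspace.span (Lin ` I \<union> ?L)"
      by (simp add: Lin_diff)
  qed
  have "Lin ` I \<subseteq> kspace.span (Var ` {..<n})"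
    using Lin_in_span_Var ideal_carrier[OF I] by blast
  then have "card (Var ` {..<n} :: 'k mpoly set) \<le> kspace.dim (Lin ` I) + card ?L"
    using kspace.card_le_dim_add_card[OF independent_Var Var_span] by simp
  moreover have "card (Var ` {..<n} :: 'k mpoly set) = n"
    by (simp add: card_image inj_on_def Var_inject)
  moreover have "card ?L \<le> m"
    using card_image_le[of "\<tau> ` {..<m}" Lin] card_image_le[of "{..<m}" \<tau>] by simp
  ultimately show ?thesis
    by (simp add: dimK_def LinI_def)
qed

section \<open>The separating re-embedding\<close>

locale separating_tuple =
  fixes n s :: nat and z :: "nat \<Rightarrow> nat" and f :: "nat \<Rightarrow> 'k::field mpoly"
    and I :: "'k mpoly set"
  assumes I_ideal: "ideal I (polyring {..<n})"
    and z_inj: "inj_on z {..<s}"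
    and z_X: "z ` {..<s} \<subseteq> {..<n}"
    and f_I: "\<forall>i<s. f i \<in> I"
    and f_sep: "coherently_separating {..<n} s z f"
begin

abbreviation Xhat :: "nat set" where
  "Xhat \<equiv> {..<n} - z ` {..<s}"

abbreviation \<sigma> :: "nat \<Rightarrow> 'k mpoly" where
  "\<sigma> \<equiv> sep_subst s z f"

lemma sep_subst_z: "i < s \<Longrightarrow> \<sigma> (z i) = tail (z i) (f i)"
proof -
  assume i: "i < s"
  have "(THE j. j < s \<and> z j = z i) = i"
    by (rule the_equality) (use i z_inj in \<open>auto dest: inj_onD\<close>)
  then show ?thesis
    unfolding sep_subst_def using i by auto
qed

lemma sep_subst_not_z: "v \<notin> z ` {..<s} \<Longrightarrow> \<sigma> v = Var v"
  unfolding sep_subst_def by auto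

lemma tail_in_carrier: "i < s \<Longrightarrow> tail (z i) (f i) \<in> carrier (polyring Xhat)"
proof -
  assume i: "i < s"
  have tail: "indets (tail (z i) (f i)) \<subseteq> insert (z i) (indets (f i))"
    by (rule indets_tail)
  have "indets (f i) \<subseteq> {..<n}" and "z i \<notin> indets (tail (z i) (f i))"
    using f_sep i unfolding coherently_separating_def maxideal_def separating_def by auto
  moreover have "z j \<notin> indets (tail (z i) (f i))" if j: "j < s" "j \<noteq> i" for j
  proof -
    have "z j \<noteq> z i" and "z j \<notin> indets (f i)"
      using j i z_inj f_sep unfolding coherently_separating_def by (auto dest: inj_onD)
    then show ?thesis
      using tail by auto
  qed
  moreover have "z i \<in> {..<n}"
    using z_X i by auto
  ultimately show ?thesis
    using tail by auto
qed

lemma sep_subst_carrier: "\<sigma> ` {..<n} \<subseteq> carrier (polyring Xhat)"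
proof (rule image_subsetI)
  fix v assume v: "v \<in> {..<n}"
  show "\<sigma> v \<in> carrier (polyring Xhat)"
  proof (cases "v \<in> z ` {..<s}")
    case True
    then obtain i where "i < s" "v = z i"
      by auto
    then show ?thesis
      using sep_subst_z tail_in_carrier by simp
  next
    case False
    then show ?thesis
      using v sep_subst_not_z by simp
  qed
qed

lemma sep_subst_cong: "p \<in> carrier (polyring {..<n}) \<Longrightarrow> subst \<sigma> p - p \<in> I"
proof (induction p rule: polyring_induct)
  case (Const c)
  then show ?case using ideal_zero[OF I_ideal] by simp
next
  case (Var v)
  show ?case
  proof (cases "v \<in> z ` {..<s}")
    case True
    then obtain i where i: "i < s" "v = z i" by auto
    have "Const (- 1 / coeffVar (z i) (f i)) * f i \<in> I"
      using f_I i by (intro ideal_mult_left[OF I_ideal]) auto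
    then show ?thesis
      using i sep_subst_z[OF i(1)] by (simp add: tail_def Const_def single_uminus)
  next
    case False
    then show ?thesis using sep_subst_not_z ideal_zero[OF I_ideal] by simp
  qed
next
  case (add p q)
  have "(subst \<sigma> p - p) + (subst \<sigma> q - q) \<in> I"
    using add.IH by (rule ideal_add[OF I_ideal])
  then show ?case by (simp add: subst_add algebra_simps)
next
  case (mult p q)
  have "subst \<sigma> q \<in> carrier (polyring {..<n})"
    using subst_carrier[OF mult.hyps(2) sep_subst_carrier] by auto
  then have "(subst \<sigma> p - p) * subst \<sigma> q + p * (subst \<sigma> q - q) \<in> I"
    using mult by (intro ideal_add[OF I_ideal] ideal_mult_right[OF I_ideal] ideal_mult_left[OF I_ideal])
  then show ?case by (simp add: subst_mult algebra_simps)
qed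

lemma sep_subst_fixes: "q \<in> carrier (polyring Xhat) \<Longrightarrow> subst \<sigma> q = q"
  using subst_cong[of q \<sigma> Var] sep_subst_not_z by auto

lemma separating_reembedding:
  "\<exists>h. kalg_iso {..<n} I Xhat (I \<inter> carrier (polyring Xhat)) h \<and>
     (\<forall>p\<in>carrier (polyring {..<n}). h (I +>\<^bsub>polyring {..<n}\<^esub> p) =
        (I \<inter> carrier (polyring Xhat)) +>\<^bsub>polyring Xhat\<^esub> subst \<sigma> p)"
proof -
  have Var: "Var ` Xhat \<subseteq> (carrier (polyring {..<n}) :: 'k mpoly set)"
    by auto
  have left_inv: "subst Var (subst \<sigma> p) - p \<in> I" if "p \<in> carrier (polyring {..<n})" for p
    using sep_subst_cong[OF that] by simp
  have right_inv: "subst \<sigma> (subst Var q) = q" if "q \<in> carrier (polyring Xhat)" for q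
    using sep_subst_fixes[OF that] by simp
  have J: "{q \<in> carrier (polyring Xhat). subst Var q \<in> I} = I \<inter> carrier (polyring Xhat)"
    by auto
  show ?thesis
    using kalg_iso_of_substs[OF I_ideal sep_subst_carrier Var left_inv right_inv] unfolding J by blast
qed

lemma card_Xhat: "card Xhat = n - s"
  using card_Diff_subset[OF _ z_X] card_image[OF z_inj] by simp

lemma kalg_iso_polyring_n_minus_s:
  "\<exists>J h. ideal J (polyring {..<n - s}) \<and> kalg_iso {..<n} I {..<n - s} J h"
proof -
  obtain \<rho> where \<rho>: "bij_betw \<rho> Xhat {..<n - s}"
    using bij_betw_iff_card[of Xhat "{..<n - s}"] card_Xhat by auto
  define \<rho>' where "\<rho>' = inv_into Xhat \<rho>"
  have \<rho>'_\<rho>: "\<rho>' (\<rho> u) = u" if "u \<in> Xhat" for u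
    unfolding \<rho>'_def using \<rho> that by (simp add: bij_betw_def)
  have \<rho>_\<rho>': "\<rho> (\<rho>' w) = w" and \<rho>'_in: "\<rho>' w \<in> Xhat" if "w \<in> {..<n - s}" for w
  proof -
    have "w \<in> \<rho> ` Xhat"
      using \<rho> that by (simp add: bij_betw_def)
    then show "\<rho> (\<rho>' w) = w" "\<rho>' w \<in> Xhat"
      unfolding \<rho>'_def by (rule f_inv_into_f, rule inv_into_into)
  qed
  define \<sigma>' where "\<sigma>' v = subst (\<lambda>u. Var (\<rho> u)) (\<sigma> v)" for v
  define \<tau>' where "\<tau>' w = (Var (\<rho>' w) :: 'k mpoly)" for w
  have \<sigma>': "\<sigma>' ` {..<n} \<subseteq> carrier (polyring {..<n - s})"
    unfolding \<sigma>'_def using sep_subst_carrier bij_betwE[OF \<rho>]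
    by (intro image_subsetI subst_carrier[of _ Xhat]) auto
  have \<tau>': "\<tau>' ` {..<n - s} \<subseteq> carrier (polyring {..<n})"
    unfolding \<tau>'_def using \<rho>'_in by auto
  have left_inv: "subst \<tau>' (subst \<sigma>' p) - p \<in> I" if p: "p \<in> carrier (polyring {..<n})" for p
  proof -
    have "subst \<tau>' (\<sigma>' v) = \<sigma> v" if "v \<in> {..<n}" for v
      unfolding \<tau>'_def \<sigma>'_def
      using subst_rename_inverse[of "\<sigma> v" Xhat \<rho>' \<rho>] sep_subst_carrier that \<rho>'_\<rho> by auto
    then have "subst \<tau>' (subst \<sigma>' p) = subst \<sigma> p"
      unfolding subst_subst using p by (intro subst_cong) auto
    then show ?thesis
      using sep_subst_cong[OF p] by simp
  qed
  have right_inv: "subst \<sigma>' (subst \<tau>' q) = q" if q: "q \<in> carrier (polyring {..<n - s})" for q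
  proof -
    have "subst \<sigma>' (\<tau>' w) = Var w" if "w \<in> {..<n - s}" for w
      unfolding \<tau>'_def \<sigma>'_def using that \<rho>'_in \<rho>_\<rho>' sep_subst_not_z by simp
    then have "subst \<sigma>' (subst \<tau>' q) = subst Var q"
      unfolding subst_subst using q by (intro subst_cong) auto
    then show ?thesis by simp
  qed
  show ?thesis
    using kalg_iso_of_substs[OF I_ideal \<sigma>' \<tau>' left_inv right_inv] by blast
qed

end

theorem corollary4p2:
  fixes n s :: nat and z :: "nat \<Rightarrow> nat" and f :: "nat \<Rightarrow> 'k::field mpoly"
    and I :: "'k mpoly set"
  assumes I_ideal: "ideal I (polyring {..<n})"
    and I_M: "I \<subseteq> maxideal {..<n}"
    and z_inj: "inj_on z {..<s}"
    and z_X: "z ` {..<s} \<subseteq> {..<n}"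
    and f_I: "\<forall>i<s. f i \<in> I"
    and f_sep: "coherently_separating {..<n} s z f"
    and s_dim: "s = dimK (LinI I)"
  shows "edim {..<n} I = n - s \<and>
         (\<exists>h. kalg_iso {..<n} I ({..<n} - z ` {..<s})
                 (I \<inter> carrier (polyring ({..<n} - z ` {..<s}))) h \<and>
              (\<forall>p \<in> carrier (polyring {..<n}).
                 h (I +>\<^bsub>polyring {..<n}\<^esub> p) =
                 (I \<inter> carrier (polyring ({..<n} - z ` {..<s})))
                   +>\<^bsub>polyring ({..<n} - z ` {..<s})\<^esub> subst (sep_subst s z f) p)) \<and>
         card ({..<n} - z ` {..<s}) = n - s \<and>
         (\<forall>m J h. ideal J (polyring {..<m}) \<and> kalg_iso {..<n} I {..<m} J h \<longrightarrow> n - s \<le> m)"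
proof -
  interpret separating_tuple n s z f I
    using I_ideal z_inj z_X f_I f_sep by (rule separating_tuple.intro)
  have lower: "\<forall>m J h. ideal J (polyring {..<m}) \<and> kalg_iso {..<n} I {..<m} J h \<longrightarrow> n - s \<le> m"
    using card_le_dim_LinI_add[OF I_ideal] s_dim by fastforce
  have "edim {..<n} I = n - s"
    unfolding edim_def
  proof (rule Least_equality)
    show "\<exists>J h. ideal J (polyring {..<n - s}) \<and> kalg_iso {..<n} I {..<n - s} J h"
      by (rule kalg_iso_polyring_n_minus_s)
  qed (use lower in blast)
  with separating_reembedding card_Xhat lower show ?thesis
    by (intro conjI)
qed

end
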